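(* Let $\mathcal C$ be a convex arc with total curvature $\int_{\mathcal C}\kappa\,ds\le\pi$ whose radius of curvature satisfies $R_1\le\rho\le R_2$ at every point, for constants $0<R_1\le R_2$. Let $\mathcal L$ be a lattice in $\mathbb R^2$, let $L=\mathrm{Length}(\mathcal C)$, and let $\delta>0$ satisfy $$\delta<\frac{d_{\mathcal L}^2}{2\left(R_2+d_{\mathcal L}+\sqrt{(R_2+d_{\mathcal L})^2-d_{\mathcal L}^2}\right)}\quad\text{and}\quad \frac{A_{\mathcal L}}{2}-L\delta-\frac32\delta^2>0.$$ Then $$\#\{Q\in\mathcal L:\mathrm{dist}(\mathcal C,Q)<\delta\}<2+\frac{L}{\big(R_1(A_{\mathcal L}-2L\delta-3\delta^2)\big)^{1/3}}.$$
   Context: A lattice is a set $\mathcal L=\mathcal L(v_0,v_1,v_2)=\{v_0+mv_1+nv_2: m,n\in\mathbb Z\}$ where $v_0,v_1,v_2\in\mathbb R^2$ and $v_1,v_2$ are linearly independent; $A_{\mathcal L}=|\det(v_1,v_2)|$ and $d_{\mathcal L}=\min\{\|P-Q\|:P,Q\in\mathcal L,\ P\ne Q\}$. All curves are of class $C^2$ with nonvanishing first and second derivative vectors, oriented so that the curvature $\kappa$ is positive; a convex arc is such a non-closed curve lying on the boundary of a convex planar region. $\rho=1/\kappa$ is the radius of curvature, $s$ is arclength, and $\mathrm{dist}(\mathcal C,Q)$ is the Euclidean distance from $Q$ to the set $\mathcal C$. *)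

theory Defs
  imports "HOL-Analysis.Analysis"
begin

definition det2 :: "real^2 \<Rightarrow> real^2 \<Rightarrow> real" where
  "det2 u v = u$1 * v$2 - u$2 * v$1"

definition lattice :: "real^2 \<Rightarrow> real^2 \<Rightarrow> real^2 \<Rightarrow> (real^2) set" where
  "lattice v0 v1 v2 = {v0 + of_int m *\<^sub>R v1 + of_int n *\<^sub>R v2 | m n. True}"

definition lattice_area :: "real^2 \<Rightarrow> real^2 \<Rightarrow> real" where
  "lattice_area v1 v2 = \<bar>det2 v1 v2\<bar>"

definition lattice_mindist :: "(real^2) set \<Rightarrow> real" where
  "lattice_mindist L = Inf {dist P Q | P Q. P \<in> L \<and> Q \<in> L \<and> P \<noteq> Q}"

definition C2_regular_curve ::
  "(real \<Rightarrow> real^2) \<Rightarrow> (real \<Rightarrow> real^2) \<Rightarrow> (real \<Rightarrow> real^2) \<Rightarrow> real \<Rightarrow> real \<Rightarrow> bool" where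
  "C2_regular_curve g g1 g2 a b \<longleftrightarrow> a < b \<and>
     (\<forall>t\<in>{a..b}. (g has_vector_derivative g1 t) (at t within {a..b})) \<and>
     (\<forall>t\<in>{a..b}. (g1 has_vector_derivative g2 t) (at t within {a..b})) \<and>
     continuous_on {a..b} g2 \<and>
     (\<forall>t\<in>{a..b}. g1 t \<noteq> 0 \<and> g2 t \<noteq> 0)"

definition curvature :: "(real \<Rightarrow> real^2) \<Rightarrow> (real \<Rightarrow> real^2) \<Rightarrow> real \<Rightarrow> real" where
  "curvature g1 g2 t = det2 (g1 t) (g2 t) / norm (g1 t) ^ 3"

definition convex_arc :: "(real \<Rightarrow> real^2) \<Rightarrow> real \<Rightarrow> real \<Rightarrow> bool" where
  "convex_arc g a b \<longleftrightarrow> inj_on g {a..b} \<and>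
     (\<exists>K::(real^2) set. convex K \<and> interior K \<noteq> {} \<and> g ` {a..b} \<subseteq> frontier K)"

definition arc_length :: "(real \<Rightarrow> real^2) \<Rightarrow> real \<Rightarrow> real \<Rightarrow> real" where
  "arc_length g1 a b = integral {a..b} (\<lambda>t. norm (g1 t))"

definition total_curvature ::
  "(real \<Rightarrow> real^2) \<Rightarrow> (real \<Rightarrow> real^2) \<Rightarrow> real \<Rightarrow> real \<Rightarrow> real" where
  "total_curvature g1 g2 a b = integral {a..b} (\<lambda>t. curvature g1 g2 t * norm (g1 t))"

end

(*
  The arc has a continuous tangent angle \<theta>, increasing by at most pi in total and at a rate
  between 1/R2 and 1/R1 per unit of arc length.

  The upper curvature bound keeps short arcs flat: three points of the arc separated by arc
  lengths p and q span a triangle with |det| at most p q (p + q) / (2 R1) <= (p + q)^3 / (8 R1).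

  The lower curvature bound makes arcs bend: while the tangent stays on one side of a
  direction \<beta>, the arc lies on the convex side of a parabola of parameter R2 in the frame
  of \<beta>, so two points at distance at least d on a common line of direction \<beta> cannot both
  be \<delta>-close to it; the hypothesis on \<delta> is exactly what this needs.  As the total turning
  is at most pi, for three lattice points \<delta>-close to the arc and ordered along it, the
  tangent stays on one side of their common direction between two consecutive ones, so they
  are not collinear.  Hence they span a lattice triangle with |det| >= A; moving them onto
  the arc changes |det| by less than 2 L \<delta> + 3 \<delta>^2, so the arc from the first to the
  third is longer than 2 (R1 (A - 2 L \<delta> - 3 \<delta>^2))^(1/3).  Summing over consecutive
  triples bounds the number of points.
*)

theory Submission
  imports Defs
begin

section \<open>Coordinates in a rotated frame\<close>

lemma norm_vec2: "norm (x::real^2) = sqrt ((x$1)\<^sup>2 + (x$2)\<^sup>2)"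
  unfolding norm_vec_def L2_set_def by (simp add: sum_2)

lemma abs_det2_le: "\<bar>det2 x y\<bar> \<le> norm x * norm y"
proof -
  have "((x$1)\<^sup>2 + (x$2)\<^sup>2) * ((y$1)\<^sup>2 + (y$2)\<^sup>2) = (det2 x y)\<^sup>2 + (x$1*y$1 + x$2*y$2)\<^sup>2"
    unfolding det2_def by (simp add: power2_eq_square algebra_simps)
  then have "sqrt ((det2 x y)\<^sup>2) \<le> sqrt (((x$1)\<^sup>2 + (x$2)\<^sup>2) * ((y$1)\<^sup>2 + (y$2)\<^sup>2))"
    by (intro real_sqrt_le_mono) simp
  then show ?thesis by (simp add: real_sqrt_mult norm_vec2)
qed

lemma bounded_linear_det2_left: "bounded_linear (\<lambda>x. det2 x y)"
  unfolding det2_def by (intro bounded_linear_intros bounded_linear_vec_nth)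

lemma bounded_linear_det2_right: "bounded_linear (det2 x)"
  unfolding det2_def by (intro bounded_linear_intros bounded_linear_vec_nth)

definition along :: "real \<Rightarrow> real^2 \<Rightarrow> real" where
  "along \<beta> p = cos \<beta> * p$1 + sin \<beta> * p$2"

definition across :: "real \<Rightarrow> real^2 \<Rightarrow> real" where
  "across \<beta> p = cos \<beta> * p$2 - sin \<beta> * p$1"

lemma bounded_linear_along: "bounded_linear (along \<beta>)"
  unfolding along_def by (intro bounded_linear_intros bounded_linear_vec_nth)

lemma bounded_linear_across: "bounded_linear (across \<beta>)"
  unfolding across_def by (intro bounded_linear_intros bounded_linear_vec_nth)

lemma along_diff: "along \<beta> (p - q) = along \<beta> p - along \<beta> q"
  and across_diff: "across \<beta> (p - q) = across \<beta> p - across \<beta> q"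
  unfolding along_def across_def by (simp_all add: algebra_simps)

lemma along_add_pi: "along (\<beta> + pi) p = - along \<beta> p"
  and across_add_pi: "across (\<beta> + pi) p = - across \<beta> p"
  unfolding along_def across_def by simp_all

lemma along_sq_add_across_sq: "(along \<beta> p)\<^sup>2 + (across \<beta> p)\<^sup>2 = (norm p)\<^sup>2"
proof -
  have "(along \<beta> p)\<^sup>2 + (across \<beta> p)\<^sup>2 = ((cos \<beta>)\<^sup>2 + (sin \<beta>)\<^sup>2) * ((p$1)\<^sup>2 + (p$2)\<^sup>2)"
    unfolding along_def across_def power2_eq_square by algebra
  then show ?thesis by (simp add: norm_vec2)
qed

lemma abs_along_le: "\<bar>along \<beta> p\<bar> \<le> norm p"
  and abs_across_le: "\<bar>across \<beta> p\<bar> \<le> norm p"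
proof -
  have "(along \<beta> p)\<^sup>2 \<le> (norm p)\<^sup>2" and "(across \<beta> p)\<^sup>2 \<le> (norm p)\<^sup>2"
    using along_sq_add_across_sq[of \<beta> p] zero_le_power2[of "along \<beta> p"]
      zero_le_power2[of "across \<beta> p"] by linarith+
  then show "\<bar>along \<beta> p\<bar> \<le> norm p" "\<bar>across \<beta> p\<bar> \<le> norm p"
    by (auto intro: power2_le_imp_le)
qed

lemma vec2_eq_along_across:
  "p$1 = along \<beta> p * cos \<beta> - across \<beta> p * sin \<beta>"
  "p$2 = along \<beta> p * sin \<beta> + across \<beta> p * cos \<beta>"
  using sin_cos_squared_add[of \<beta>] unfolding along_def across_def power2_eq_square
  by algebra+

lemma polar_if_along_eq_norm:
  assumes "along \<beta> p = norm p"
  shows "p$1 = norm p * cos \<beta>" "p$2 = norm p * sin \<beta>"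
proof -
  have "across \<beta> p = 0"
    using along_sq_add_across_sq[of \<beta> p] assms by simp
  then show "p$1 = norm p * cos \<beta>" "p$2 = norm p * sin \<beta>"
    using vec2_eq_along_across[of p \<beta>] assms by simp_all
qed

lemma det2_eq_norm_mult_across:
  assumes "along \<beta> u = norm u"
  shows "det2 u w = norm u * across \<beta> w"
  using polar_if_along_eq_norm[OF assms] unfolding det2_def across_def by (simp add: algebra_simps)

lemma vec2_polar:
  obtains \<beta> where "along \<beta> p = norm p" "across \<beta> p = 0"
proof (cases "p = 0")
  case True
  then show ?thesis using that[of 0] by (simp add: along_def across_def)
next
  case False
  have "(p$1)\<^sup>2 + (p$2)\<^sup>2 = (norm p)\<^sup>2"
    by (simp add: norm_vec2)
  then have "(p$1 / norm p)\<^sup>2 + (p$2 / norm p)\<^sup>2 = 1"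
    using False by (simp add: power_divide add_divide_distrib[symmetric])
  then obtain \<beta> where \<beta>: "p$1 / norm p = cos \<beta>" "p$2 / norm p = sin \<beta>"
    by (rule sincos_total_2pi)
  then have "p$1 = norm p * cos \<beta>" "p$2 = norm p * sin \<beta>"
    using False by (simp_all add: field_simps)
  then have "along \<beta> p = norm p" "across \<beta> p = 0"
    using sin_cos_squared_add3[of \<beta>] unfolding along_def across_def by algebra+
  then show ?thesis using that by simp
qed

lemma det2_across_along_identity:
  "det2 p q * across \<beta> p + along \<beta> q * (norm p)\<^sup>2 = along \<beta> p * (p$1 * q$1 + p$2 * q$2)"
  unfolding det2_def along_def across_def norm_vec2 by (simp add: power2_eq_square algebra_simps)

lemma deriv_nonneg_imp_le:
  fixes f f' :: "real \<Rightarrow> real"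
  assumes "s \<le> t" "{s..t} \<subseteq> S"
    and "\<And>x. x \<in> {s..t} \<Longrightarrow> (f has_real_derivative f' x) (at x within S)"
    and "\<And>x. x \<in> {s..t} \<Longrightarrow> 0 \<le> f' x"
  shows "f s \<le> f t"
proof -
  have "(f has_derivative (\<lambda>h. f' x * h)) (at x within {s..t})" if "s \<le> x" "x \<le> t" for x
    using DERIV_subset[OF assms(3)] assms(2) that by (auto simp: has_field_derivative_def)
  from mvt_very_simple[OF assms(1) this] obtain x where "x \<in> {s..t}" "f t - f s = f' x * (t - s)"
    by blast
  moreover have "0 \<le> f' x * (t - s)"
    using assms(1,4) \<open>x \<in> {s..t}\<close> by simp
  ultimately show ?thesis by simp
qed

lemma deriv_nonpos_imp_ge:
  fixes f f' :: "real \<Rightarrow> real"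
  assumes "s \<le> t" "{s..t} \<subseteq> S"
    and "\<And>x. x \<in> {s..t} \<Longrightarrow> (f has_real_derivative f' x) (at x within S)"
    and "\<And>x. x \<in> {s..t} \<Longrightarrow> f' x \<le> 0"
  shows "f t \<le> f s"
  using deriv_nonneg_imp_le[of s t S "\<lambda>x. - f x" "\<lambda>x. - f' x"] assms
  by (auto intro: DERIV_minus)

lemma bounded_linear_has_real_derivative:
  assumes "bounded_linear h" "(f has_vector_derivative f') F"
  shows "((\<lambda>t. h (f t)) has_real_derivative h f') F"
  using bounded_linear.has_vector_derivative[OF assms]
  by (simp add: has_real_derivative_iff_has_vector_derivative)

lemma sin_sign_between_multiples_pi:
  fixes k :: int
  assumes "of_int k * pi \<le> x" "x \<le> (of_int k + 1) * pi"
  shows "(even k \<longrightarrow> 0 \<le> sin x) \<and> (odd k \<longrightarrow> sin x \<le> 0)"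
proof -
  have "0 \<le> sin (x - of_int k * pi)"
    using assms by (intro sin_ge_zero) (auto simp: algebra_simps)
  moreover have "sin x = sin (x - of_int k * pi) * (if even k then 1 else -1)"
    using sin_add[of "x - of_int k * pi" "of_int k * pi"] by (simp add: mult.commute)
  ultimately show ?thesis by auto
qed

lemma sin_constant_sign_on_one_side:
  fixes \<phi> :: "real \<Rightarrow> real"
  assumes "t1 \<le> t2" "t2 \<le> t3" and mono: "mono_on {t1..t3} \<phi>" and "\<phi> t3 - \<phi> t1 \<le> pi"
  shows "((\<forall>t\<in>{t1..t2}. 0 \<le> sin (\<phi> t)) \<or> (\<forall>t\<in>{t1..t2}. sin (\<phi> t) \<le> 0)) \<or>
         ((\<forall>t\<in>{t2..t3}. 0 \<le> sin (\<phi> t)) \<or> (\<forall>t\<in>{t2..t3}. sin (\<phi> t) \<le> 0))"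
proof -
  define k where "k = \<lfloor>\<phi> t1 / pi\<rfloor>"
  have k: "of_int k * pi \<le> \<phi> t1" "\<phi> t1 < (of_int k + 1) * pi"
    unfolding k_def using floor_divide_lower[of pi "\<phi> t1"] floor_divide_upper[of pi "\<phi> t1"]
    by auto
  have \<phi>_le: "\<phi> s \<le> \<phi> t" if "t1 \<le> s" "s \<le> t" "t \<le> t3" for s t
    using mono that by (auto intro: mono_onD)
  show ?thesis
  proof (cases "\<phi> t2 \<le> (of_int k + 1) * pi")
    case True
    then have "(even k \<longrightarrow> 0 \<le> sin (\<phi> t)) \<and> (odd k \<longrightarrow> sin (\<phi> t) \<le> 0)" if "t \<in> {t1..t2}" for t
      using k that assms \<phi>_le[of t1 t] \<phi>_le[of t t2]
      by (intro sin_sign_between_multiples_pi) auto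
    then show ?thesis by blast
  next
    case False
    then have "(even (k + 1) \<longrightarrow> 0 \<le> sin (\<phi> t)) \<and> (odd (k + 1) \<longrightarrow> sin (\<phi> t) \<le> 0)"
      if "t \<in> {t2..t3}" for t
      using k that assms \<phi>_le[of t2 t] \<phi>_le[of t t3]
      by (intro sin_sign_between_multiples_pi) (auto simp: algebra_simps)
    then show ?thesis by blast
  qed
qed

lemma antimono_sign_cases:
  fixes f :: "real \<Rightarrow> real"
  assumes "p \<le> q" "continuous_on {p..q} f"
    and anti: "\<And>s t. p \<le> s \<Longrightarrow> s \<le> t \<Longrightarrow> t \<le> q \<Longrightarrow> f t \<le> f s"
  shows "(\<forall>t\<in>{p..q}. 0 \<le> f t) \<or> (\<forall>t\<in>{p..q}. f t \<le> 0) \<or>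
    (\<exists>m\<in>{p..q}. (\<forall>t\<in>{p..m}. 0 \<le> f t) \<and> (\<forall>t\<in>{m..q}. f t \<le> 0))"
proof -
  consider "0 \<le> f q" | "f p \<le> 0" | "f q < 0" "0 < f p"
    by linarith
  then show ?thesis
  proof cases
    case 1
    have "\<forall>t\<in>{p..q}. 0 \<le> f t"
      using anti[of _ q] 1 by (auto intro: order_trans)
    then show ?thesis by blast
  next
    case 2
    have "\<forall>t\<in>{p..q}. f t \<le> 0"
      using anti[of p] 2 by fastforce
    then show ?thesis by blast
  next
    case 3
    then obtain m where m: "p \<le> m" "m \<le> q" "f m = 0"
      using IVT2'[of f q 0 p, OF _ _ assms(1,2)] by auto
    then have "(\<forall>t\<in>{p..m}. 0 \<le> f t) \<and> (\<forall>t\<in>{m..q}. f t \<le> 0)"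
      using anti[of _ m] anti[of m] by auto
    then show ?thesis
      using m(1,2) by auto
  qed
qed

lemma card_less_of_triple_gaps:
  fixes T :: "'a::linorder set" and f :: "'a \<Rightarrow> real"
  assumes "finite T" "0 < c" "0 < l"
    and range: "\<And>t. t \<in> T \<Longrightarrow> 0 \<le> f t \<and> f t \<le> l"
    and gap: "\<And>r s t. r \<in> T \<Longrightarrow> s \<in> T \<Longrightarrow> t \<in> T \<Longrightarrow> r < s \<Longrightarrow> s < t \<Longrightarrow> 2 * c < f t - f r"
  shows "real (card T) < 2 + l / c"
proof (cases "card T \<le> 2")
  case True
  moreover have "0 < l / c"
    using assms(2,3) by simp
  ultimately show ?thesis by simp
next
  case False
  obtain xs where xs: "sorted_wrt (<) xs" "set xs = T" "length xs = card T"
    using finite_set_strict_sorted[OF assms(1)] by blast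
  have mem: "xs ! k \<in> T" if "k < card T" for k
    using that xs(2,3) nth_mem by metis
  define m where "m = card T - 2"
  have telescope: "(\<Sum>k<n. h (k + 2) - h k) = h (n + 1) + h n - h 1 - h 0" for n and h :: "nat \<Rightarrow> real"
    by (induction n) (simp_all add: algebra_simps)
  have "(\<Sum>k<m. 2 * c) < (\<Sum>k<m. f (xs ! (k + 2)) - f (xs ! k))"
  proof (rule sum_strict_mono)
    fix k assume "k \<in> {..<m}"
    then show "2 * c < f (xs ! (k + 2)) - f (xs ! k)"
      using mem sorted_wrt_nth_less[OF xs(1)] xs(3) unfolding m_def
      by (intro gap[of _ "xs ! (k + 1)"]) auto
  qed (use False m_def in \<open>auto simp: lessThan_empty_iff\<close>)
  also have "\<dots> = f (xs ! (m + 1)) + f (xs ! m) - f (xs ! 1) - f (xs ! 0)"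
    by (rule telescope)
  also have "\<dots> \<le> 2 * l"
    using range[of "xs ! (m + 1)"] range[of "xs ! m"] range[of "xs ! 1"] range[of "xs ! 0"]
      mem False unfolding m_def by auto
  finally have "real m < l / c"
    using assms(2) by (simp add: field_simps)
  then show ?thesis
    using False unfolding m_def by linarith
qed

lemma powr_one_third_less:
  fixes x y :: real
  assumes "0 < x" "x < y ^ 3"
  shows "x powr (1/3) < y"
proof -
  have "0 < y ^ 3"
    using assms by linarith
  then have "0 < y"
    by (simp add: zero_less_power_eq)
  then have "(y ^ 3) powr (1/3) = y"
    by (simp flip: powr_numeral add: powr_powr)
  moreover have "x powr (1/3) < (y ^ 3) powr (1/3)"
    using assms by (intro powr_less_mono2) auto
  ultimately show ?thesis by simp
qed

lemma four_mult_mult_add_le_cube: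
  fixes p q :: real
  assumes "0 \<le> p" "0 \<le> q"
  shows "4 * (p * q * (p + q)) \<le> (p + q) ^ 3"
proof -
  have "(p + q) ^ 3 - 4 * (p * q * (p + q)) = (p + q) * (p - q)\<^sup>2"
    by (simp add: power2_eq_square power3_eq_cube algebra_simps)
  moreover have "0 \<le> (p + q) * (p - q)\<^sup>2"
    using assms by simp
  ultimately show ?thesis by linarith
qed

text \<open>The bound on \<open>\<delta>\<close> is the smaller root of \<open>(d - 2\<delta>)\<^sup>2 = 4R\<delta>\<close>, rationalised.\<close>

lemma gap_bounds_of_delta_bound:
  fixes d R \<delta> :: real
  assumes "0 \<le> d" "0 < R" "0 < \<delta>"
    and "\<delta> < d\<^sup>2 / (2 * (R + d + sqrt ((R + d)\<^sup>2 - d\<^sup>2)))"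
  shows "2 * \<delta> < d" "4 * R * \<delta> < (d - 2 * \<delta>)\<^sup>2"
proof -
  define r where "r = R + d"
  define S where "S = sqrt (r\<^sup>2 - d\<^sup>2)"
  have "d\<^sup>2 \<le> r\<^sup>2"
    using assms(1,2) unfolding r_def by (intro power_mono) auto
  then have S: "0 \<le> S" "S\<^sup>2 = r\<^sup>2 - d\<^sup>2"
    unfolding S_def by simp_all
  have pos: "0 < r + S"
    using assms(1,2) S(1) unfolding r_def by simp
  have "\<delta> < d\<^sup>2 / (2 * (r + S))"
    using assms(4) unfolding r_def S_def .
  then have "2 * \<delta> * (r + S) < d\<^sup>2"
    using pos by (simp add: field_simps)
  also have "d\<^sup>2 = (r - S) * (r + S)"
    using S(2) by (simp add: power2_eq_square algebra_simps)
  finally have two_\<delta>: "2 * \<delta> < r - S"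
    using pos by simp
  have "(r - d)\<^sup>2 \<le> S\<^sup>2"
    using S(2) assms(1,2) unfolding r_def by (simp add: power2_eq_square algebra_simps)
  then have "r - d \<le> S"
    using S(1) by (rule power2_le_imp_le)
  then show "2 * \<delta> < d"
    using two_\<delta> by simp
  have "S\<^sup>2 < (r - 2 * \<delta>)\<^sup>2"
    using two_\<delta> S(1) by (intro power_strict_mono) auto
  then show "4 * R * \<delta> < (d - 2 * \<delta>)\<^sup>2"
    using S(2) unfolding r_def by (simp add: power2_eq_square algebra_simps)
qed

section \<open>Lattice triangles\<close>

lemma abs_det2_perturb:
  fixes P1 P2 P3 Q1 Q2 Q3 :: "real^2"
  assumes "norm (Q1 - P1) < \<delta>" "norm (Q2 - P2) < \<delta>" "norm (Q3 - P3) < \<delta>"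
  shows "\<bar>det2 (Q2 - Q1) (Q3 - Q1)\<bar> < \<bar>det2 (P2 - P1) (P3 - P1)\<bar>
     + \<delta> * (norm (P1 - P2) + norm (P2 - P3) + norm (P3 - P1)) + 3 * \<delta>\<^sup>2"
proof -
  define e1 e2 e3 where "e1 = Q1 - P1" and "e2 = Q2 - P2" and "e3 = Q3 - P3"
  have expand: "det2 (Q2 - Q1) (Q3 - Q1) = det2 (P2 - P1) (P3 - P1)
      + det2 e1 (P2 - P3) + det2 e2 (P3 - P1) + det2 e3 (P1 - P2)
      + det2 e1 e2 + det2 e2 e3 + det2 e3 e1"
    unfolding e1_def e2_def e3_def det2_def by (simp add: algebra_simps)
  have lin: "\<bar>det2 e u\<bar> \<le> \<delta> * norm u" if "norm e < \<delta>" for e u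
    using abs_det2_le[of e u] mult_right_mono[of "norm e" \<delta> "norm u"] that by simp
  have quadratic: "\<bar>det2 e e'\<bar> < \<delta>\<^sup>2" if "norm e < \<delta>" "norm e' < \<delta>" for e e'
  proof -
    have "norm e * norm e' < \<delta> * \<delta>"
      using that by (intro mult_strict_mono') auto
    then show ?thesis
      using abs_det2_le[of e e'] by (simp add: power2_eq_square)
  qed
  have "norm e1 < \<delta>" "norm e2 < \<delta>" "norm e3 < \<delta>"
    using assms unfolding e1_def e2_def e3_def by simp_all
  moreover have "\<bar>det2 (Q2 - Q1) (Q3 - Q1)\<bar> \<le> \<bar>det2 (P2 - P1) (P3 - P1)\<bar>
      + \<bar>det2 e1 (P2 - P3)\<bar> + \<bar>det2 e2 (P3 - P1)\<bar> + \<bar>det2 e3 (P1 - P2)\<bar>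
      + \<bar>det2 e1 e2\<bar> + \<bar>det2 e2 e3\<bar> + \<bar>det2 e3 e1\<bar>"
    unfolding expand by (intro order.trans[OF abs_triangle_ineq] add_mono order.refl)
  ultimately show ?thesis
    using lin[of e1 "P2 - P3"] lin[of e2 "P3 - P1"] lin[of e3 "P1 - P2"]
      quadratic[of e1 e2] quadratic[of e2 e3] quadratic[of e3 e1]
    by (simp add: algebra_simps)
qed

lemma lattice_det2_ge_area:
  assumes "Q1 \<in> lattice v0 v1 v2" "Q2 \<in> lattice v0 v1 v2" "Q3 \<in> lattice v0 v1 v2"
    and "det2 (Q2 - Q1) (Q3 - Q1) \<noteq> 0"
  shows "lattice_area v1 v2 \<le> \<bar>det2 (Q2 - Q1) (Q3 - Q1)\<bar>"
proof -
  obtain m1 n1 m2 n2 m3 n3 where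
    Q: "Q1 = v0 + of_int m1 *\<^sub>R v1 + of_int n1 *\<^sub>R v2"
       "Q2 = v0 + of_int m2 *\<^sub>R v1 + of_int n2 *\<^sub>R v2"
       "Q3 = v0 + of_int m3 *\<^sub>R v1 + of_int n3 *\<^sub>R v2"
    using assms(1-3) unfolding lattice_def by blast
  define k where "k = (m2 - m1) * (n3 - n1) - (n2 - n1) * (m3 - m1)"
  have det: "det2 (Q2 - Q1) (Q3 - Q1) = of_int k * det2 v1 v2"
    unfolding Q k_def det2_def by (simp add: algebra_simps)
  then have "1 \<le> \<bar>of_int k :: real\<bar>"
    using assms(4) by auto
  then have "1 * \<bar>det2 v1 v2\<bar> \<le> \<bar>of_int k :: real\<bar> * \<bar>det2 v1 v2\<bar>"
    by (intro mult_right_mono) auto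
  then show ?thesis
    unfolding det lattice_area_def by (simp add: abs_mult)
qed

lemma lattice_mindist_le_dist:
  assumes "P \<in> L" "Q \<in> L" "P \<noteq> Q"
  shows "lattice_mindist L \<le> dist P Q"
  unfolding lattice_mindist_def using assms
  by (intro cInf_lower bdd_belowI[of _ 0]) auto

lemma lattice_mindist_nonneg:
  assumes "v1 \<noteq> 0"
  shows "0 \<le> lattice_mindist (lattice v0 v1 v2)"
proof -
  have "v0 = v0 + of_int 0 *\<^sub>R v1 + of_int 0 *\<^sub>R v2" "v0 + v1 = v0 + of_int 1 *\<^sub>R v1 + of_int 0 *\<^sub>R v2"
    by simp_all
  then have "v0 \<in> lattice v0 v1 v2" "v0 + v1 \<in> lattice v0 v1 v2"
    unfolding lattice_def by blast+
  moreover have "v0 \<noteq> v0 + v1"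
    using assms by simp
  ultimately have "{dist P Q | P Q. P \<in> lattice v0 v1 v2 \<and> Q \<in> lattice v0 v1 v2 \<and> P \<noteq> Q} \<noteq> {}"
    by blast
  then show ?thesis
    unfolding lattice_mindist_def by (rule cInf_greatest) auto
qed

section \<open>Arcs of bounded curvature turning by at most \<open>pi\<close>\<close>

locale curvature_bounded_arc =
  fixes g g1 g2 :: "real \<Rightarrow> real^2" and a b R1 R2 :: real
  assumes curve: "C2_regular_curve g g1 g2 a b"
    and pos_curv: "\<forall>t\<in>{a..b}. curvature g1 g2 t > 0"
    and totcurv: "total_curvature g1 g2 a b \<le> pi"
    and R1_pos: "0 < R1"
    and rho: "\<forall>t\<in>{a..b}. R1 \<le> 1 / curvature g1 g2 t \<and> 1 / curvature g1 g2 t \<le> R2"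
begin

lemma a_less_b: "a < b"
  and g_has_derivative: "t \<in> {a..b} \<Longrightarrow> (g has_vector_derivative g1 t) (at t within {a..b})"
  and g1_has_derivative: "t \<in> {a..b} \<Longrightarrow> (g1 has_vector_derivative g2 t) (at t within {a..b})"
  and g2_continuous: "continuous_on {a..b} g2"
  and g1_nonzero: "t \<in> {a..b} \<Longrightarrow> g1 t \<noteq> 0"
  using curve unfolding C2_regular_curve_def by auto

lemma g1_continuous: "continuous_on {a..b} g1"
  using g1_has_derivative has_vector_derivative_continuous continuous_on_eq_continuous_within
  by blast

lemma g1_component_has_derivative:
  "t \<in> {a..b} \<Longrightarrow> ((\<lambda>t. g1 t $ i) has_real_derivative g2 t $ i) (at t within {a..b})"
  by (rule bounded_linear_has_real_derivative[OF bounded_linear_vec_nth g1_has_derivative])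

lemma R2_pos: "0 < R2"
  using rho R1_pos a_less_b by force

lemma curvature_bounds:
  assumes "t \<in> {a..b}"
  shows "1 / R2 \<le> curvature g1 g2 t" "curvature g1 g2 t \<le> 1 / R1"
  using pos_curv rho R1_pos R2_pos assms by (auto simp: field_simps)

definition speed :: "real \<Rightarrow> real" where
  "speed t = norm (g1 t)"

definition turn :: "real \<Rightarrow> real" where
  "turn t = curvature g1 g2 t * speed t"

definition arclen :: "real \<Rightarrow> real" where
  "arclen t = integral {a..t} speed"

definition initial_angle :: real where
  "initial_angle = (SOME \<beta>. along \<beta> (g1 a) = norm (g1 a))"

definition \<theta> :: "real \<Rightarrow> real" where
  "\<theta> t = initial_angle + integral {a..t} turn"

lemma speed_pos: "t \<in> {a..b} \<Longrightarrow> 0 < speed t"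
  unfolding speed_def using g1_nonzero by simp

lemma speed_continuous: "continuous_on {a..b} speed"
  unfolding speed_def[abs_def] by (intro continuous_intros g1_continuous)

lemma turn_continuous: "continuous_on {a..b} turn"
proof -
  have "norm (g1 t) ^ 3 \<noteq> 0" if "t \<in> {a..b}" for t
    using g1_nonzero that by simp
  then show ?thesis
    unfolding turn_def[abs_def] speed_def curvature_def det2_def
    by (intro continuous_intros g1_continuous g2_continuous) auto
qed

lemma turn_bounds:
  assumes "t \<in> {a..b}"
  shows "speed t / R2 \<le> turn t" "turn t \<le> speed t / R1" "0 < turn t"
  using curvature_bounds[OF assms] speed_pos[OF assms] pos_curv assms
    mult_right_mono[of "1 / R2" "curvature g1 g2 t" "speed t"]
    mult_right_mono[of "curvature g1 g2 t" "1 / R1" "speed t"]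
  unfolding turn_def by auto

lemma turn_mult_speed_sq: "t \<in> {a..b} \<Longrightarrow> turn t * (speed t)\<^sup>2 = det2 (g1 t) (g2 t)"
  using speed_pos[of t] unfolding turn_def curvature_def speed_def
  by (simp add: power2_eq_square power3_eq_cube)

lemma speed_has_derivative:
  assumes "t \<in> {a..b}"
  shows "(speed has_real_derivative (g1 t $ 1 * g2 t $ 1 + g1 t $ 2 * g2 t $ 2) / speed t)
    (at t within {a..b})"
proof -
  have "0 < (g1 t $ 1)\<^sup>2 + (g1 t $ 2)\<^sup>2"
    using speed_pos[OF assms] unfolding speed_def norm_vec2 by simp
  then show ?thesis
    unfolding speed_def[abs_def] norm_vec2
    by (auto intro!: derivative_eq_intros g1_component_has_derivative assms
        simp: power2_eq_square) (simp add: field_simps)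
qed

lemma arclen_has_derivative: "t \<in> {a..b} \<Longrightarrow> (arclen has_real_derivative speed t) (at t within {a..b})"
  unfolding arclen_def[abs_def] has_real_derivative_iff_has_vector_derivative
  by (rule integral_has_vector_derivative[OF speed_continuous])

lemma \<theta>_has_derivative: "t \<in> {a..b} \<Longrightarrow> (\<theta> has_real_derivative turn t) (at t within {a..b})"
  unfolding \<theta>_def[abs_def]
  by (auto intro!: derivative_eq_intros integral_has_real_derivative turn_continuous)

lemma arclen_a: "arclen a = 0"
  unfolding arclen_def by simp

lemma \<theta>_a: "along (\<theta> a) (g1 a) = norm (g1 a)"
proof -
  obtain \<beta> where "along \<beta> (g1 a) = norm (g1 a)"
    using vec2_polar by blast
  then have "along initial_angle (g1 a) = norm (g1 a)"
    unfolding initial_angle_def by (rule someI)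
  then show ?thesis
    unfolding \<theta>_def by simp
qed

lemma along_\<theta>_g1_div_speed_has_derivative:
  assumes t: "t \<in> {a..b}"
  shows "((\<lambda>t. along (\<theta> t) (g1 t) / speed t) has_real_derivative 0) (at t within {a..b})"
proof -
  define D where "D = turn t * across (\<theta> t) (g1 t) + along (\<theta> t) (g2 t)"
  define E where "E = (g1 t $ 1 * g2 t $ 1 + g1 t $ 2 * g2 t $ 2) / speed t"
  have "((\<lambda>t. along (\<theta> t) (g1 t)) has_real_derivative D) (at t within {a..b})"
    unfolding along_def across_def D_def
    by (auto intro!: derivative_eq_intros \<theta>_has_derivative g1_component_has_derivative t)
      (simp add: algebra_simps)
  from DERIV_divide[OF this speed_has_derivative[OF t]]
  have "((\<lambda>t. along (\<theta> t) (g1 t) / speed t) has_real_derivative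
      (D * speed t - along (\<theta> t) (g1 t) * E) / (speed t * speed t)) (at t within {a..b})"
    using speed_pos[OF t] unfolding E_def by simp
  moreover have "D * speed t - along (\<theta> t) (g1 t) * E = 0"
    \<comment> \<open>\<open>\<theta>' = det2 g1 g2 / |g1|\<^sup>2\<close> is exactly what makes this vanish\<close>
    using det2_across_along_identity[of "g1 t" "g2 t" "\<theta> t", folded turn_mult_speed_sq[OF t]]
      speed_pos[OF t]
    unfolding D_def E_def speed_def by (simp add: field_simps power2_eq_square)
  ultimately show ?thesis by simp
qed

lemma along_\<theta>_g1: "t \<in> {a..b} \<Longrightarrow> along (\<theta> t) (g1 t) = speed t"
proof -
  obtain c where c: "\<forall>t\<in>{a..b}. along (\<theta> t) (g1 t) / speed t = c"
    using has_field_derivative_zero_constant[OF convex_real_interval(5)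
        along_\<theta>_g1_div_speed_has_derivative] by blast
  have "c = 1"
    using c[rule_format, of a] \<theta>_a speed_pos[of a] a_less_b unfolding speed_def by simp
  then show "t \<in> {a..b} \<Longrightarrow> along (\<theta> t) (g1 t) = speed t"
    using c speed_pos[of t] by (simp add: field_simps)
qed

lemma g1_polar:
  assumes "t \<in> {a..b}"
  shows "g1 t $ 1 = speed t * cos (\<theta> t)" "g1 t $ 2 = speed t * sin (\<theta> t)"
  using polar_if_along_eq_norm[of "\<theta> t" "g1 t"] along_\<theta>_g1[OF assms] unfolding speed_def
  by simp_all

lemma along_g1: "t \<in> {a..b} \<Longrightarrow> along \<beta> (g1 t) = speed t * cos (\<theta> t - \<beta>)"
  by (simp add: along_def g1_polar cos_diff algebra_simps)

lemma across_g1: "t \<in> {a..b} \<Longrightarrow> across \<beta> (g1 t) = speed t * sin (\<theta> t - \<beta>)"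
  by (simp add: across_def g1_polar sin_diff algebra_simps)

lemma det2_g1_g1:
  "s \<in> {a..b} \<Longrightarrow> t \<in> {a..b} \<Longrightarrow> det2 (g1 s) (g1 t) = speed s * speed t * sin (\<theta> t - \<theta> s)"
  by (simp add: det2_def g1_polar sin_diff algebra_simps)

lemma along_g_has_derivative:
  "t \<in> {a..b} \<Longrightarrow>
    ((\<lambda>t. along \<beta> (g t)) has_real_derivative speed t * cos (\<theta> t - \<beta>)) (at t within {a..b})"
  using bounded_linear_has_real_derivative[OF bounded_linear_along g_has_derivative] along_g1
  by simp

lemma across_g_has_derivative:
  "t \<in> {a..b} \<Longrightarrow>
    ((\<lambda>t. across \<beta> (g t)) has_real_derivative speed t * sin (\<theta> t - \<beta>)) (at t within {a..b})"
  using bounded_linear_has_real_derivative[OF bounded_linear_across g_has_derivative] across_g1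
  by simp

lemma arclen_mono: "a \<le> s \<Longrightarrow> s \<le> t \<Longrightarrow> t \<le> b \<Longrightarrow> arclen s \<le> arclen t"
  by (rule deriv_nonneg_imp_le[of _ _ "{a..b}" _ speed])
    (auto intro: arclen_has_derivative less_imp_le[OF speed_pos])

lemma \<theta>_mono: "a \<le> s \<Longrightarrow> s \<le> t \<Longrightarrow> t \<le> b \<Longrightarrow> \<theta> s \<le> \<theta> t"
  by (rule deriv_nonneg_imp_le[of _ _ "{a..b}" _ turn])
    (auto intro: \<theta>_has_derivative less_imp_le[OF turn_bounds(3)])

lemma \<theta>_total: "\<theta> b - \<theta> a \<le> pi"
  using totcurv unfolding \<theta>_def total_curvature_def turn_def speed_def by simp

lemma \<theta>_diff_le_arclen_diff:
  assumes "a \<le> s" "s \<le> t" "t \<le> b"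
  shows "\<theta> t - \<theta> s \<le> (arclen t - arclen s) / R1"
proof -
  have "arclen s / R1 - \<theta> s \<le> arclen t / R1 - \<theta> t"
  proof (rule deriv_nonneg_imp_le[of _ _ "{a..b}" "\<lambda>x. arclen x / R1 - \<theta> x"
        "\<lambda>x. speed x / R1 - turn x"])
    fix x assume "x \<in> {s..t}"
    then have x: "x \<in> {a..b}"
      using assms by auto
    show "((\<lambda>x. arclen x / R1 - \<theta> x) has_real_derivative speed x / R1 - turn x) (at x within {a..b})"
      by (intro DERIV_diff DERIV_cdivide arclen_has_derivative \<theta>_has_derivative x)
    show "0 \<le> speed x / R1 - turn x"
      using turn_bounds(2)[OF x] by simp
  qed (use assms in auto)
  then show ?thesis
    by (simp add: diff_divide_distrib)
qed

lemma arclen_pos: "0 < arclen b"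
proof -
  have "integral {a..b} (\<lambda>_. 0) < integral {a..b} speed"
    using a_less_b speed_pos
    by (intro integral_less_real continuous_intros speed_continuous) auto
  then show ?thesis
    unfolding arclen_def by simp
qed

lemma chord_le_arclen:
  assumes "a \<le> s" "s \<le> t" "t \<le> b"
  shows "norm (g t - g s) \<le> arclen t - arclen s"
proof -
  obtain \<beta> where \<beta>: "along \<beta> (g t - g s) = norm (g t - g s)"
    using vec2_polar by blast
  have "arclen s - along \<beta> (g s) \<le> arclen t - along \<beta> (g t)"
  proof (rule deriv_nonneg_imp_le[of _ _ "{a..b}" "\<lambda>x. arclen x - along \<beta> (g x)"
        "\<lambda>x. speed x - speed x * cos (\<theta> x - \<beta>)"])
    fix x assume "x \<in> {s..t}"
    then have x: "x \<in> {a..b}"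
      using assms by auto
    show "((\<lambda>x. arclen x - along \<beta> (g x)) has_real_derivative speed x - speed x * cos (\<theta> x - \<beta>))
        (at x within {a..b})"
      by (intro DERIV_diff arclen_has_derivative along_g_has_derivative x)
    show "0 \<le> speed x - speed x * cos (\<theta> x - \<beta>)"
      using speed_pos[OF x] mult_left_mono[of "cos (\<theta> x - \<beta>)" 1 "speed x"] by simp
  qed (use assms in auto)
  then show ?thesis
    using \<beta> along_diff[of \<beta> "g t" "g s"] by simp
qed

lemma sin_\<theta>_has_derivative:
  "t \<in> {a..b} \<Longrightarrow>
    ((\<lambda>t. sin (\<theta> t - \<beta>)) has_real_derivative cos (\<theta> t - \<beta>) * turn t) (at t within {a..b})"
  by (auto intro!: derivative_eq_intros \<theta>_has_derivative)

lemma cos_\<theta>_has_derivative: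
  "t \<in> {a..b} \<Longrightarrow>
    ((\<lambda>t. cos (\<theta> t - \<beta>)) has_real_derivative - sin (\<theta> t - \<beta>) * turn t) (at t within {a..b})"
  by (auto intro!: derivative_eq_intros \<theta>_has_derivative)

lemma speed_le_R2_turn: "t \<in> {a..b} \<Longrightarrow> speed t \<le> R2 * turn t"
  using turn_bounds(1)[of t] R2_pos by (simp add: field_simps)

text \<open>On a circle of radius \<open>R2\<close>, \<open>R2 * sin (\<theta> - \<beta>)\<close> is the distance along \<open>\<beta>\<close> from the point
  with tangent direction \<open>\<beta>\<close>; the arc, turning at least as fast, gains along \<open>\<beta>\<close> no more.\<close>

lemma R2_sin_minus_along_has_derivative:
  "t \<in> {a..b} \<Longrightarrow> ((\<lambda>t. R2 * sin (\<theta> t - \<beta>) - along \<beta> (g t)) has_real_derivative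
    cos (\<theta> t - \<beta>) * (R2 * turn t - speed t)) (at t within {a..b})"
  by (rule DERIV_cong[OF DERIV_diff[OF DERIV_cmult[OF sin_\<theta>_has_derivative] along_g_has_derivative]])
    (simp_all add: algebra_simps)

lemma along_increment_le_rising:
  assumes "a \<le> p" "p \<le> t" "t \<le> b"
    and C: "\<And>x. x \<in> {p..t} \<Longrightarrow> 0 \<le> cos (\<theta> x - \<beta>)" and "0 \<le> sin (\<theta> p - \<beta>)"
  shows "along \<beta> (g t) - along \<beta> (g p) \<le> R2 * sin (\<theta> t - \<beta>)"
proof -
  have "R2 * sin (\<theta> p - \<beta>) - along \<beta> (g p) \<le> R2 * sin (\<theta> t - \<beta>) - along \<beta> (g t)"
    using assms(1-3) C speed_le_R2_turn
    by (intro deriv_nonneg_imp_le[OF assms(2) _ R2_sin_minus_along_has_derivative]) auto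
  moreover have "0 \<le> R2 * sin (\<theta> p - \<beta>)"
    using assms(5) R2_pos by simp
  ultimately show ?thesis by simp
qed

lemma along_increment_le_falling:
  assumes "a \<le> t" "t \<le> q" "q \<le> b"
    and C: "\<And>x. x \<in> {t..q} \<Longrightarrow> cos (\<theta> x - \<beta>) \<le> 0" and "0 \<le> sin (\<theta> q - \<beta>)"
  shows "along \<beta> (g t) - along \<beta> (g q) \<le> R2 * sin (\<theta> t - \<beta>)"
proof -
  have "R2 * sin (\<theta> q - \<beta>) - along \<beta> (g q) \<le> R2 * sin (\<theta> t - \<beta>) - along \<beta> (g t)"
    using assms(1-3) C speed_le_R2_turn
    by (intro deriv_nonpos_imp_ge[OF assms(2) _ R2_sin_minus_along_has_derivative])
      (auto simp: mult_nonpos_nonneg)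
  moreover have "0 \<le> R2 * sin (\<theta> q - \<beta>)"
    using assms(5) R2_pos by simp
  ultimately show ?thesis by simp
qed

lemma along_mono_rising:
  assumes "a \<le> p" "p \<le> q" "q \<le> b" and C: "\<And>t. t \<in> {p..q} \<Longrightarrow> 0 \<le> cos (\<theta> t - \<beta>)"
  shows "along \<beta> (g p) \<le> along \<beta> (g q)"
  using assms C speed_pos
  by (intro deriv_nonneg_imp_le[OF assms(2) _ along_g_has_derivative])
    (auto intro!: mult_nonneg_nonneg intro: less_imp_le)

lemma along_antimono_falling:
  assumes "a \<le> p" "p \<le> q" "q \<le> b" and C: "\<And>t. t \<in> {p..q} \<Longrightarrow> cos (\<theta> t - \<beta>) \<le> 0"
  shows "along \<beta> (g q) \<le> along \<beta> (g p)"
  using assms C speed_pos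
  by (intro deriv_nonpos_imp_ge[OF assms(2) _ along_g_has_derivative])
    (auto simp: mult_nonneg_nonpos less_imp_le)

text \<open>While the tangent turns from direction \<open>\<beta>\<close> towards \<open>\<beta> + pi/2\<close>, curvature at least
  \<open>1/R2\<close> keeps the arc above the parabola \<open>across = along\<^sup>2 / (2 R2)\<close>.\<close>

lemma parabola_bound_rising:
  assumes pq: "a \<le> p" "p \<le> q" "q \<le> b"
    and C: "\<And>t. t \<in> {p..q} \<Longrightarrow> 0 \<le> cos (\<theta> t - \<beta>)"
    and S: "\<And>t. t \<in> {p..q} \<Longrightarrow> 0 \<le> sin (\<theta> t - \<beta>)"
  shows "(along \<beta> (g q) - along \<beta> (g p))\<^sup>2 \<le> 2 * R2 * (across \<beta> (g q) - across \<beta> (g p))"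
proof -
  define E H where "E t = along \<beta> (g t)" and "H t = across \<beta> (g t)" for t
  have "2 * R2 * (H p - H p) - (E p - E p)\<^sup>2 \<le> 2 * R2 * (H q - H p) - (E q - E p)\<^sup>2"
  proof (rule deriv_nonneg_imp_le[of _ _ "{a..b}" "\<lambda>x. 2 * R2 * (H x - H p) - (E x - E p)\<^sup>2"
        "\<lambda>x. 2 * speed x * (R2 * sin (\<theta> x - \<beta>) - (E x - E p) * cos (\<theta> x - \<beta>))"])
    fix x assume x: "x \<in> {p..q}"
    then have xab: "x \<in> {a..b}"
      using pq by auto
    show "((\<lambda>x. 2 * R2 * (H x - H p) - (E x - E p)\<^sup>2) has_real_derivative
        2 * speed x * (R2 * sin (\<theta> x - \<beta>) - (E x - E p) * cos (\<theta> x - \<beta>))) (at x within {a..b})"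
      unfolding E_def H_def
      by (rule DERIV_cong[OF DERIV_diff[OF DERIV_cmult[OF DERIV_diff[OF across_g_has_derivative[OF xab]
              DERIV_const]] DERIV_power[OF DERIV_diff[OF along_g_has_derivative[OF xab] DERIV_const]]]])
        (simp add: algebra_simps)
    have "E x - E p \<le> R2 * sin (\<theta> x - \<beta>)"
      unfolding E_def using x pq C S by (intro along_increment_le_rising) auto
    then have "(E x - E p) * cos (\<theta> x - \<beta>) \<le> R2 * sin (\<theta> x - \<beta>) * cos (\<theta> x - \<beta>)"
      using C[OF x] by (rule mult_right_mono)
    also have "\<dots> \<le> R2 * sin (\<theta> x - \<beta>)"
      using R2_pos S[OF x] by (simp add: mult_left_le)
    finally show "0 \<le> 2 * speed x * (R2 * sin (\<theta> x - \<beta>) - (E x - E p) * cos (\<theta> x - \<beta>))"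
      using speed_pos[OF xab] by simp
  qed (use pq in auto)
  then show ?thesis
    unfolding E_def H_def by simp
qed

lemma parabola_bound_falling:
  assumes pq: "a \<le> p" "p \<le> q" "q \<le> b"
    and C: "\<And>t. t \<in> {p..q} \<Longrightarrow> cos (\<theta> t - \<beta>) \<le> 0"
    and S: "\<And>t. t \<in> {p..q} \<Longrightarrow> 0 \<le> sin (\<theta> t - \<beta>)"
  shows "(along \<beta> (g q) - along \<beta> (g p))\<^sup>2 \<le> 2 * R2 * (across \<beta> (g q) - across \<beta> (g p))"
proof -
  define E H where "E t = along \<beta> (g t)" and "H t = across \<beta> (g t)" for t
  have "2 * R2 * (H q - H q) - (E q - E q)\<^sup>2 \<le> 2 * R2 * (H q - H p) - (E p - E q)\<^sup>2"
  proof (rule deriv_nonpos_imp_ge[of p q "{a..b}" "\<lambda>x. 2 * R2 * (H q - H x) - (E x - E q)\<^sup>2"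
        "\<lambda>x. - 2 * speed x * (R2 * sin (\<theta> x - \<beta>) + (E x - E q) * cos (\<theta> x - \<beta>))"])
    fix x assume x: "x \<in> {p..q}"
    then have xab: "x \<in> {a..b}"
      using pq by auto
    show "((\<lambda>x. 2 * R2 * (H q - H x) - (E x - E q)\<^sup>2) has_real_derivative
        - 2 * speed x * (R2 * sin (\<theta> x - \<beta>) + (E x - E q) * cos (\<theta> x - \<beta>))) (at x within {a..b})"
      unfolding E_def H_def
      by (rule DERIV_cong[OF DERIV_diff[OF DERIV_cmult[OF DERIV_diff[OF DERIV_const
              across_g_has_derivative[OF xab]]] DERIV_power[OF DERIV_diff[OF
              along_g_has_derivative[OF xab] DERIV_const]]]])
        (simp add: algebra_simps)
    have "E x - E q \<le> R2 * sin (\<theta> x - \<beta>)"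
      unfolding E_def using x pq C S by (intro along_increment_le_falling) auto
    have "- (R2 * sin (\<theta> x - \<beta>)) \<le> R2 * sin (\<theta> x - \<beta>) * cos (\<theta> x - \<beta>)"
      using R2_pos S[OF x] mult_left_mono[of "-1" "cos (\<theta> x - \<beta>)" "R2 * sin (\<theta> x - \<beta>)"]
      by simp
    also have "\<dots> \<le> (E x - E q) * cos (\<theta> x - \<beta>)"
      using \<open>E x - E q \<le> _\<close> C[OF x] by (rule mult_right_mono_neg)
    finally show "- 2 * speed x * (R2 * sin (\<theta> x - \<beta>) + (E x - E q) * cos (\<theta> x - \<beta>)) \<le> 0"
      using speed_pos[OF xab] by (simp add: mult_nonneg_nonneg)
  qed (use pq in auto)
  then show ?thesis
    unfolding E_def H_def by (simp add: power2_commute)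
qed

lemma cos_\<theta>_sign_cases:
  assumes pq: "a \<le> p" "p \<le> q" "q \<le> b"
    and S: "\<And>t. t \<in> {p..q} \<Longrightarrow> 0 \<le> sin (\<theta> t - \<beta>)"
  shows "(\<forall>t\<in>{p..q}. 0 \<le> cos (\<theta> t - \<beta>)) \<or> (\<forall>t\<in>{p..q}. cos (\<theta> t - \<beta>) \<le> 0) \<or>
    (\<exists>m\<in>{p..q}. (\<forall>t\<in>{p..m}. 0 \<le> cos (\<theta> t - \<beta>)) \<and> (\<forall>t\<in>{m..q}. cos (\<theta> t - \<beta>) \<le> 0))"
proof -
  have "continuous_on {a..b} (\<lambda>t. cos (\<theta> t - \<beta>))"
    using cos_\<theta>_has_derivative DERIV_continuous continuous_on_eq_continuous_within by blast
  then have cont: "continuous_on {p..q} (\<lambda>t. cos (\<theta> t - \<beta>))"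
    by (rule continuous_on_subset) (use pq in auto)
  have anti: "cos (\<theta> t - \<beta>) \<le> cos (\<theta> s - \<beta>)" if "p \<le> s" "s \<le> t" "t \<le> q" for s t
  proof (rule deriv_nonpos_imp_ge[of s t "{a..b}" _ "\<lambda>x. - sin (\<theta> x - \<beta>) * turn x"])
    fix x assume "x \<in> {s..t}"
    then have "x \<in> {p..q}" "x \<in> {a..b}"
      using that pq by auto
    then show "((\<lambda>x. cos (\<theta> x - \<beta>)) has_real_derivative - sin (\<theta> x - \<beta>) * turn x) (at x within {a..b})"
      "- sin (\<theta> x - \<beta>) * turn x \<le> 0"
      using cos_\<theta>_has_derivative[of x \<beta>] S[of x] turn_bounds(3)[of x] by simp_all
  qed (use that pq in auto)
  show ?thesis
    by (rule antimono_sign_cases[OF pq(2) cont]) (rule anti)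
qed

lemma parabola_bound:
  assumes pq: "a \<le> p" "p \<le> q" "q \<le> b"
    and S: "\<And>t. t \<in> {p..q} \<Longrightarrow> 0 \<le> sin (\<theta> t - \<beta>)"
  shows "(along \<beta> (g q) - along \<beta> (g p))\<^sup>2 \<le> 2 * R2 * (across \<beta> (g q) - across \<beta> (g p))"
proof -
  have "(\<forall>t\<in>{p..q}. 0 \<le> cos (\<theta> t - \<beta>)) \<or> (\<forall>t\<in>{p..q}. cos (\<theta> t - \<beta>) \<le> 0) \<or>
    (\<exists>m\<in>{p..q}. (\<forall>t\<in>{p..m}. 0 \<le> cos (\<theta> t - \<beta>)) \<and> (\<forall>t\<in>{m..q}. cos (\<theta> t - \<beta>) \<le> 0))"
    by (rule cos_\<theta>_sign_cases[OF pq]) (rule S)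
  then show ?thesis
  proof (elim disjE bexE conjE)
    assume "\<forall>t\<in>{p..q}. 0 \<le> cos (\<theta> t - \<beta>)"
    then show ?thesis
      by (intro parabola_bound_rising[OF pq _ S]) auto
  next
    assume "\<forall>t\<in>{p..q}. cos (\<theta> t - \<beta>) \<le> 0"
    then show ?thesis
      by (intro parabola_bound_falling[OF pq _ S]) auto
  next
    fix m assume m: "m \<in> {p..q}"
      and C: "\<forall>t\<in>{p..m}. 0 \<le> cos (\<theta> t - \<beta>)" "\<forall>t\<in>{m..q}. cos (\<theta> t - \<beta>) \<le> 0"
    have pm: "a \<le> p" "p \<le> m" "m \<le> b" and mq: "a \<le> m" "m \<le> q" "q \<le> b"
      using m pq by auto
    have S_pm: "\<And>t. t \<in> {p..m} \<Longrightarrow> 0 \<le> sin (\<theta> t - \<beta>)"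
      and S_mq: "\<And>t. t \<in> {m..q} \<Longrightarrow> 0 \<le> sin (\<theta> t - \<beta>)"
      using S m by auto
    define E H where "E t = along \<beta> (g t)" and "H t = across \<beta> (g t)" for t
    have rise: "(E m - E p)\<^sup>2 \<le> 2 * R2 * (H m - H p)" "E p \<le> E m"
      using parabola_bound_rising[OF pm _ S_pm] along_mono_rising[OF pm] C(1)
      unfolding E_def H_def by blast+
    have fall: "(E q - E m)\<^sup>2 \<le> 2 * R2 * (H q - H m)" "E q \<le> E m"
      using parabola_bound_falling[OF mq _ S_mq] along_antimono_falling[OF mq] C(2)
      unfolding E_def H_def by blast+
    have "(E q - E p)\<^sup>2 = (E m - E p)\<^sup>2 + (E q - E m)\<^sup>2 + 2 * ((E m - E p) * (E q - E m))"
      by (simp add: power2_eq_square algebra_simps)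
    also have "\<dots> \<le> (E m - E p)\<^sup>2 + (E q - E m)\<^sup>2"
      using rise(2) fall(2) by (simp add: mult_nonneg_nonpos)
    also have "\<dots> \<le> 2 * R2 * (H q - H p)"
      using rise(1) fall(1) by (simp add: algebra_simps)
    finally show ?thesis
      unfolding E_def H_def .
  qed
qed

lemma parabola_bound_abs:
  assumes "a \<le> p" "p \<le> q" "q \<le> b"
    and "(\<forall>t\<in>{p..q}. 0 \<le> sin (\<theta> t - \<beta>)) \<or> (\<forall>t\<in>{p..q}. sin (\<theta> t - \<beta>) \<le> 0)"
  shows "(along \<beta> (g q) - along \<beta> (g p))\<^sup>2 \<le> 2 * R2 * \<bar>across \<beta> (g q) - across \<beta> (g p)\<bar>"
  using assms(4)
proof
  assume "\<forall>t\<in>{p..q}. 0 \<le> sin (\<theta> t - \<beta>)"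
  then have "(along \<beta> (g q) - along \<beta> (g p))\<^sup>2 \<le> 2 * R2 * (across \<beta> (g q) - across \<beta> (g p))"
    by (intro parabola_bound[OF assms(1-3)]) auto
  then show ?thesis
    using R2_pos by (smt (verit) mult_left_mono)
next
  assume "\<forall>t\<in>{p..q}. sin (\<theta> t - \<beta>) \<le> 0"
  moreover have "sin (\<theta> t - (\<beta> + pi)) = - sin (\<theta> t - \<beta>)" for t
    by (simp add: sin_diff)
  ultimately have "\<forall>t\<in>{p..q}. 0 \<le> sin (\<theta> t - (\<beta> + pi))"
    by simp
  then have "(along (\<beta> + pi) (g q) - along (\<beta> + pi) (g p))\<^sup>2
      \<le> 2 * R2 * (across (\<beta> + pi) (g q) - across (\<beta> + pi) (g p))"
    by (intro parabola_bound[OF assms(1-3)]) auto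
  then show ?thesis
    using R2_pos unfolding along_add_pi across_add_pi
    by (smt (verit) mult_left_mono power2_minus)
qed

lemma aligned_pair_not_near_subarc:
  assumes "a \<le> p" "p \<le> q" "q \<le> b"
    and "(\<forall>t\<in>{p..q}. 0 \<le> sin (\<theta> t - \<beta>)) \<or> (\<forall>t\<in>{p..q}. sin (\<theta> t - \<beta>) \<le> 0)"
    and close: "norm (g p - P) < \<delta>" "norm (g q - Q) < \<delta>"
    and aligned: "across \<beta> (Q - P) = 0"
    and far: "d \<le> norm (Q - P)"
    and gap: "2 * \<delta> < d" "4 * R2 * \<delta> < (d - 2 * \<delta>)\<^sup>2"
  shows False
proof -
  have along_split:
      "along \<beta> (g q) - along \<beta> (g p) = along \<beta> (g q - Q) + along \<beta> (Q - P) - along \<beta> (g p - P)"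
    and across_split:
      "across \<beta> (g q) - across \<beta> (g p) = across \<beta> (g q - Q) + across \<beta> (Q - P) - across \<beta> (g p - P)"
    by (simp_all add: along_diff across_diff)
  have "\<bar>along \<beta> (Q - P)\<bar> = norm (Q - P)"
    using along_sq_add_across_sq[of \<beta> "Q - P"] aligned by (auto simp: power2_eq_iff)
  then have "d - 2 * \<delta> < \<bar>along \<beta> (g q) - along \<beta> (g p)\<bar>"
    using along_split abs_along_le[of \<beta> "g q - Q"] abs_along_le[of \<beta> "g p - P"] close far
    by linarith
  then have "(d - 2 * \<delta>)\<^sup>2 < (along \<beta> (g q) - along \<beta> (g p))\<^sup>2"
    using gap(1) by (metis abs_le_square_iff abs_of_pos diff_gt_0_iff_gt linorder_not_le)
  also have "\<dots> \<le> 2 * R2 * \<bar>across \<beta> (g q) - across \<beta> (g p)\<bar>"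
    by (rule parabola_bound_abs[OF assms(1-4)])
  also have "\<dots> \<le> 2 * R2 * (2 * \<delta>)"
    using across_split abs_across_le[of \<beta> "g q - Q"] abs_across_le[of \<beta> "g p - P"]
      close aligned R2_pos by (intro mult_left_mono) linarith+
  finally show False
    using gap(2) by simp
qed

lemma close_triple_not_collinear:
  assumes t: "a \<le> t1" "t1 \<le> t2" "t2 \<le> t3" "t3 \<le> b"
    and close: "norm (g t1 - Q1) < \<delta>" "norm (g t2 - Q2) < \<delta>" "norm (g t3 - Q3) < \<delta>"
    and far: "d \<le> norm (Q2 - Q1)" "d \<le> norm (Q3 - Q2)"
    and gap: "2 * \<delta> < d" "4 * R2 * \<delta> < (d - 2 * \<delta>)\<^sup>2"
  shows "det2 (Q2 - Q1) (Q3 - Q1) \<noteq> 0"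
proof
  assume collinear: "det2 (Q2 - Q1) (Q3 - Q1) = 0"
  obtain \<beta> where \<beta>: "along \<beta> (Q2 - Q1) = norm (Q2 - Q1)" "across \<beta> (Q2 - Q1) = 0"
    using vec2_polar by blast
  have "norm (Q2 - Q1) \<noteq> 0"
    using far(1) gap(1) close(1) norm_ge_zero[of "g t1 - Q1"] by linarith
  then have "across \<beta> (Q3 - Q1) = 0"
    using det2_eq_norm_mult_across[OF \<beta>(1), of "Q3 - Q1"] collinear by simp
  then have "across \<beta> (Q3 - Q2) = 0"
    using across_diff[of \<beta> "Q3 - Q1" "Q2 - Q1"] \<beta>(2) by simp
  moreover have "mono_on {t1..t3} (\<lambda>t. \<theta> t - \<beta>)"
    using t by (intro mono_onI) (auto intro: \<theta>_mono)
  moreover have "\<theta> t3 - \<theta> t1 \<le> pi"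
    using \<theta>_total \<theta>_mono[of a t1] \<theta>_mono[of t3 b] t by simp
  ultimately show False
    using sin_constant_sign_on_one_side[of t1 t2 t3 "\<lambda>t. \<theta> t - \<beta>"] t
      aligned_pair_not_near_subarc[of t1 t2 \<beta> Q1 \<delta> Q2 d] aligned_pair_not_near_subarc[of t2 t3 \<beta> Q2 \<delta> Q3 d]
      close far gap \<beta>(2)
    by auto
qed

lemma det2_g1_g1_bounds:
  assumes "a \<le> s" "s \<le> t" "t \<le> b"
  shows "0 \<le> det2 (g1 s) (g1 t)" "det2 (g1 s) (g1 t) \<le> speed s * speed t * ((arclen t - arclen s) / R1)"
proof -
  have st: "s \<in> {a..b}" "t \<in> {a..b}"
    using assms by auto
  have "0 \<le> \<theta> t - \<theta> s" "\<theta> t - \<theta> s \<le> pi"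
    using \<theta>_mono[of s t] \<theta>_mono[of a s] \<theta>_mono[of t b] \<theta>_total assms by auto
  then have sin: "0 \<le> sin (\<theta> t - \<theta> s)" "sin (\<theta> t - \<theta> s) \<le> (arclen t - arclen s) / R1"
    using sin_ge_zero sin_x_le_x[of "\<theta> t - \<theta> s"] \<theta>_diff_le_arclen_diff[OF assms] by auto
  have "0 \<le> speed s * speed t"
    using speed_pos[OF st(1)] speed_pos[OF st(2)] by simp
  then show "0 \<le> det2 (g1 s) (g1 t)" "det2 (g1 s) (g1 t) \<le> speed s * speed t * ((arclen t - arclen s) / R1)"
    unfolding det2_g1_g1[OF st] using sin mult_left_mono[OF sin(2)] by simp_all
qed

lemma det2_g1_chord_bounds:
  assumes "a \<le> s" "s \<le> t2" "t2 \<le> t3" "t3 \<le> b"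
  shows "0 \<le> det2 (g1 s) (g t3 - g t2)"
    and "det2 (g1 s) (g t3 - g t2)
      \<le> speed s / (2 * R1) * ((arclen t3 - arclen s)\<^sup>2 - (arclen t2 - arclen s)\<^sup>2)"
proof -
  have sub: "x \<in> {a..b}" if "x \<in> {t2..t3}" for x
    using that assms by auto
  have D: "((\<lambda>t. det2 (g1 s) (g t)) has_real_derivative det2 (g1 s) (g1 x)) (at x within {a..b})"
    if "x \<in> {t2..t3}" for x
    by (rule bounded_linear_has_real_derivative[OF bounded_linear_det2_right
          g_has_derivative[OF sub[OF that]]])
  have diff: "det2 (g1 s) (g t3 - g t2) = det2 (g1 s) (g t3) - det2 (g1 s) (g t2)"
    by (simp add: det2_def algebra_simps)
  have "det2 (g1 s) (g t2) \<le> det2 (g1 s) (g t3)"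
    by (rule deriv_nonneg_imp_le[OF assms(3) _ D]) (use assms det2_g1_g1_bounds(1) in auto)
  then show "0 \<le> det2 (g1 s) (g t3 - g t2)"
    unfolding diff by simp
  define B where "B t = speed s / (2 * R1) * (arclen t - arclen s)\<^sup>2" for t
  have "B t2 - det2 (g1 s) (g t2) \<le> B t3 - det2 (g1 s) (g t3)"
  proof (rule deriv_nonneg_imp_le[of t2 t3 "{a..b}" _
        "\<lambda>x. speed s * speed x * ((arclen x - arclen s) / R1) - det2 (g1 s) (g1 x)"])
    fix x assume x: "x \<in> {t2..t3}"
    show "((\<lambda>x. B x - det2 (g1 s) (g x)) has_real_derivative
        speed s * speed x * ((arclen x - arclen s) / R1) - det2 (g1 s) (g1 x)) (at x within {a..b})"
      unfolding B_def
      by (rule DERIV_cong[OF DERIV_diff[OF DERIV_cmult[OF DERIV_power[OF DERIV_diff[OF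
              arclen_has_derivative[OF sub[OF x]] DERIV_const]]] D[OF x]]])
        (use R1_pos in \<open>simp add: field_simps\<close>)
    show "0 \<le> speed s * speed x * ((arclen x - arclen s) / R1) - det2 (g1 s) (g1 x)"
      using det2_g1_g1_bounds(2)[of s x] x assms by simp
  qed (use assms in auto)
  then show "det2 (g1 s) (g t3 - g t2)
      \<le> speed s / (2 * R1) * ((arclen t3 - arclen s)\<^sup>2 - (arclen t2 - arclen s)\<^sup>2)"
    unfolding diff B_def by (simp add: algebra_simps)
qed

lemma det2_chord_bounds:
  assumes "a \<le> t1" "t1 \<le> t2" "t2 \<le> t3" "t3 \<le> b"
  shows "0 \<le> det2 (g t2 - g t1) (g t3 - g t2)"
    and "det2 (g t2 - g t1) (g t3 - g t2)
      \<le> (arclen t2 - arclen t1) * (arclen t3 - arclen t2) * (arclen t3 - arclen t1) / (2 * R1)"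
proof -
  define c where "c = g t3 - g t2"
  have sub: "x \<in> {a..b}" if "x \<in> {t1..t2}" for x
    using that assms by auto
  have D: "((\<lambda>t. det2 (g t) c) has_real_derivative det2 (g1 x) c) (at x within {a..b})"
    if "x \<in> {t1..t2}" for x
    by (rule bounded_linear_has_real_derivative[OF bounded_linear_det2_left
          g_has_derivative[OF sub[OF that]]])
  have diff: "det2 (g t2 - g t1) c = det2 (g t2) c - det2 (g t1) c"
    by (simp add: det2_def algebra_simps)
  have "det2 (g t1) c \<le> det2 (g t2) c"
    by (rule deriv_nonneg_imp_le[OF assms(2) _ D]) (use assms det2_g1_chord_bounds(1) in \<open>auto simp: c_def\<close>)
  then show "0 \<le> det2 (g t2 - g t1) (g t3 - g t2)"
    using diff unfolding c_def by simp
  define W where "W t = ((arclen t2 - arclen t) ^ 3 - (arclen t3 - arclen t) ^ 3) / (6 * R1)" for t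
  have "W t1 - det2 (g t1) c \<le> W t2 - det2 (g t2) c"
  proof (rule deriv_nonneg_imp_le[of t1 t2 "{a..b}" _
        "\<lambda>x. speed x / (2 * R1) * ((arclen t3 - arclen x)\<^sup>2 - (arclen t2 - arclen x)\<^sup>2) - det2 (g1 x) c"])
    fix x assume x: "x \<in> {t1..t2}"
    show "((\<lambda>x. W x - det2 (g x) c) has_real_derivative
        speed x / (2 * R1) * ((arclen t3 - arclen x)\<^sup>2 - (arclen t2 - arclen x)\<^sup>2) - det2 (g1 x) c)
        (at x within {a..b})"
      unfolding W_def
      by (rule DERIV_cong[OF DERIV_diff[OF DERIV_cdivide[OF DERIV_diff[OF
              DERIV_power[OF DERIV_diff[OF DERIV_const arclen_has_derivative[OF sub[OF x]]]]
              DERIV_power[OF DERIV_diff[OF DERIV_const arclen_has_derivative[OF sub[OF x]]]]]] D[OF x]]])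
        (use R1_pos in \<open>simp add: field_simps power2_eq_square\<close>)
    show "0 \<le> speed x / (2 * R1) * ((arclen t3 - arclen x)\<^sup>2 - (arclen t2 - arclen x)\<^sup>2) - det2 (g1 x) c"
      using det2_g1_chord_bounds(2)[of x t2 t3] x assms unfolding c_def by simp
  qed (use assms in auto)
  moreover have "W t2 - W t1
      = (arclen t2 - arclen t1) * (arclen t3 - arclen t2) * (arclen t3 - arclen t1) / (2 * R1)"
    unfolding W_def using R1_pos by (simp add: field_simps power3_eq_cube)
  ultimately show "det2 (g t2 - g t1) (g t3 - g t2)
      \<le> (arclen t2 - arclen t1) * (arclen t3 - arclen t2) * (arclen t3 - arclen t1) / (2 * R1)"
    using diff unfolding c_def by simp
qed

lemma chord_perimeter_le:
  assumes "a \<le> t1" "t1 \<le> t2" "t2 \<le> t3" "t3 \<le> b"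
  shows "norm (g t1 - g t2) + norm (g t2 - g t3) + norm (g t3 - g t1) \<le> 2 * arclen b"
proof -
  have "0 \<le> arclen t1" "arclen t3 \<le> arclen b"
    using arclen_mono[of a t1] arclen_mono[of t3 b] arclen_a assms by auto
  then show ?thesis
    using chord_le_arclen[of t1 t2] chord_le_arclen[of t2 t3] chord_le_arclen[of t1 t3] assms
    by (simp add: norm_minus_commute)
qed

lemma arclen_triple_gap:
  assumes t: "a \<le> t1" "t1 \<le> t2" "t2 \<le> t3" "t3 \<le> b"
    and close: "norm (g t1 - Q1) < \<delta>" "norm (g t2 - Q2) < \<delta>" "norm (g t3 - Q3) < \<delta>"
    and area: "A \<le> \<bar>det2 (Q2 - Q1) (Q3 - Q1)\<bar>"
    and pos: "0 < A - 2 * arclen b * \<delta> - 3 * \<delta>\<^sup>2"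
  shows "2 * (R1 * (A - 2 * arclen b * \<delta> - 3 * \<delta>\<^sup>2)) powr (1/3) < arclen t3 - arclen t1"
proof -
  define p q where "p = arclen t2 - arclen t1" and "q = arclen t3 - arclen t2"
  have "0 \<le> \<delta>"
    using close(1) norm_ge_zero[of "g t1 - Q1"] by linarith
  then have perimeter: "\<delta> * (norm (g t1 - g t2) + norm (g t2 - g t3) + norm (g t3 - g t1))
      \<le> 2 * arclen b * \<delta>"
    using mult_left_mono[OF chord_perimeter_le[OF t]] by (simp add: mult.commute)
  have "\<bar>det2 (Q2 - Q1) (Q3 - Q1)\<bar> < \<bar>det2 (g t2 - g t1) (g t3 - g t1)\<bar>
      + \<delta> * (norm (g t1 - g t2) + norm (g t2 - g t3) + norm (g t3 - g t1)) + 3 * \<delta>\<^sup>2"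
    by (rule abs_det2_perturb) (use close in \<open>simp_all add: norm_minus_commute\<close>)
  moreover have "det2 (g t2 - g t1) (g t3 - g t1) = det2 (g t2 - g t1) (g t3 - g t2)"
    by (simp add: det2_def algebra_simps)
  ultimately have "A - 2 * arclen b * \<delta> - 3 * \<delta>\<^sup>2 < p * q * (p + q) / (2 * R1)"
    using area perimeter det2_chord_bounds[OF t] unfolding p_def q_def by simp
  also have "\<dots> = 4 * (p * q * (p + q)) / (8 * R1)"
    by simp
  also have "\<dots> \<le> (p + q) ^ 3 / (8 * R1)"
    using four_mult_mult_add_le_cube[of p q] arclen_mono t R1_pos unfolding p_def q_def
    by (intro divide_right_mono) auto
  finally have "R1 * (A - 2 * arclen b * \<delta> - 3 * \<delta>\<^sup>2) < ((p + q) / 2) ^ 3"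
    using R1_pos by (simp add: field_simps power_divide)
  then have "(R1 * (A - 2 * arclen b * \<delta> - 3 * \<delta>\<^sup>2)) powr (1/3) < (p + q) / 2"
    using R1_pos pos by (intro powr_one_third_less) simp_all
  then show ?thesis
    unfolding p_def q_def by simp
qed

lemma infdist_arc_lessE:
  assumes "infdist Q (g ` {a..b}) < \<delta>"
  obtains t where "t \<in> {a..b}" "norm (g t - Q) < \<delta>"
proof -
  have "compact (g ` {a..b})"
    using g_has_derivative has_vector_derivative_continuous continuous_on_eq_continuous_within
    by (intro compact_continuous_image) blast+
  moreover have "g ` {a..b} \<noteq> {}"
    using a_less_b by simp
  ultimately obtain y where "y \<in> g ` {a..b}" "infdist Q (g ` {a..b}) = dist Q y"
    using infdist_attains_inf compact_imp_closed by blast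
  then show ?thesis
    using that assms by (auto simp: dist_norm norm_minus_commute)
qed

lemma close_points_injective_param:
  assumes sep: "\<And>Q Q'. Q \<in> P \<Longrightarrow> Q' \<in> P \<Longrightarrow> Q \<noteq> Q' \<Longrightarrow> d \<le> dist Q Q'"
    and gap: "2 * \<delta> < d"
    and close: "\<And>Q. Q \<in> P \<Longrightarrow> infdist Q (g ` {a..b}) < \<delta>"
  obtains \<tau> where "inj_on \<tau> P" "\<And>Q. Q \<in> P \<Longrightarrow> \<tau> Q \<in> {a..b}"
    "\<And>Q. Q \<in> P \<Longrightarrow> norm (g (\<tau> Q) - Q) < \<delta>"
proof -
  have "\<forall>Q\<in>P. \<exists>t. t \<in> {a..b} \<and> norm (g t - Q) < \<delta>"
    using infdist_arc_lessE[OF close] by blast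
  then have "\<exists>\<tau>. \<forall>Q\<in>P. \<tau> Q \<in> {a..b} \<and> norm (g (\<tau> Q) - Q) < \<delta>"
    by (rule bchoice)
  then obtain \<tau> where \<tau>: "\<forall>Q\<in>P. \<tau> Q \<in> {a..b} \<and> norm (g (\<tau> Q) - Q) < \<delta>"
    by blast
  have "inj_on \<tau> P"
  proof (rule inj_onI, rule ccontr)
    fix Q Q' assume Q: "Q \<in> P" "Q' \<in> P" "\<tau> Q = \<tau> Q'" "Q \<noteq> Q'"
    have "dist Q Q' \<le> norm (g (\<tau> Q) - Q) + norm (g (\<tau> Q) - Q')"
      by (metis dist_norm dist_triangle2 norm_minus_commute)
    moreover have "norm (g (\<tau> Q) - Q) < \<delta>" "norm (g (\<tau> Q) - Q') < \<delta>"
      using \<tau> Q(1-3) by auto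
    ultimately show False
      using sep[OF Q(1,2,4)] gap by linarith
  qed
  with \<tau> show ?thesis
    using that by blast
qed

theorem card_close_points_less:
  fixes P :: "(real^2) set"
  assumes sep: "\<And>Q Q'. Q \<in> P \<Longrightarrow> Q' \<in> P \<Longrightarrow> Q \<noteq> Q' \<Longrightarrow> d \<le> dist Q Q'"
    and area: "\<And>Q1 Q2 Q3. Q1 \<in> P \<Longrightarrow> Q2 \<in> P \<Longrightarrow> Q3 \<in> P \<Longrightarrow>
      det2 (Q2 - Q1) (Q3 - Q1) \<noteq> 0 \<Longrightarrow> A \<le> \<bar>det2 (Q2 - Q1) (Q3 - Q1)\<bar>"
    and close: "\<And>Q. Q \<in> P \<Longrightarrow> infdist Q (g ` {a..b}) < \<delta>"
    and gap: "2 * \<delta> < d" "4 * R2 * \<delta> < (d - 2 * \<delta>)\<^sup>2"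
    and pos: "0 < A - 2 * arclen b * \<delta> - 3 * \<delta>\<^sup>2"
  shows "real (card P) < 2 + arclen b / (R1 * (A - 2 * arclen b * \<delta> - 3 * \<delta>\<^sup>2)) powr (1/3)"
proof -
  define c where "c = (R1 * (A - 2 * arclen b * \<delta> - 3 * \<delta>\<^sup>2)) powr (1/3)"
  have c_pos: "0 < c"
    unfolding c_def using R1_pos pos by simp
  obtain \<tau> where inj: "inj_on \<tau> P" and \<tau>: "\<And>Q. Q \<in> P \<Longrightarrow> \<tau> Q \<in> {a..b}"
    and close_\<tau>: "\<And>Q. Q \<in> P \<Longrightarrow> norm (g (\<tau> Q) - Q) < \<delta>"
    using close_points_injective_param[OF sep gap(1) close] by blast
  have "real (card (\<tau> ` P)) < 2 + arclen b / c" if "finite P"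
  proof (rule card_less_of_triple_gaps)
    show "finite (\<tau> ` P)" "0 < c" "0 < arclen b"
      using that c_pos arclen_pos by simp_all
    show "0 \<le> arclen t \<and> arclen t \<le> arclen b" if "t \<in> \<tau> ` P" for t
      using \<open>t \<in> \<tau> ` P\<close> \<tau> arclen_mono[of a t] arclen_mono[of t b] arclen_a by force
    show "2 * c < arclen t3 - arclen t1"
      if "t1 \<in> \<tau> ` P" "t2 \<in> \<tau> ` P" "t3 \<in> \<tau> ` P" "t1 < t2" "t2 < t3" for t1 t2 t3
    proof -
      obtain Q1 Q2 Q3 where Q: "Q1 \<in> P" "Q2 \<in> P" "Q3 \<in> P" "t1 = \<tau> Q1" "t2 = \<tau> Q2" "t3 = \<tau> Q3"
        using \<open>t1 \<in> \<tau> ` P\<close> \<open>t2 \<in> \<tau> ` P\<close> \<open>t3 \<in> \<tau> ` P\<close> by blast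
      have t: "a \<le> t1" "t1 \<le> t2" "t2 \<le> t3" "t3 \<le> b"
        using \<tau>[OF Q(1)] \<tau>[OF Q(3)] Q(4,6) \<open>t1 < t2\<close> \<open>t2 < t3\<close> by simp_all
      have close_t: "norm (g t1 - Q1) < \<delta>" "norm (g t2 - Q2) < \<delta>" "norm (g t3 - Q3) < \<delta>"
        using close_\<tau> Q by simp_all
      have "d \<le> norm (Q2 - Q1)" "d \<le> norm (Q3 - Q2)"
        using sep[of Q2 Q1] sep[of Q3 Q2] Q \<open>t1 < t2\<close> \<open>t2 < t3\<close> by (auto simp: dist_norm)
      then have "det2 (Q2 - Q1) (Q3 - Q1) \<noteq> 0"
        by (rule close_triple_not_collinear[OF t close_t _ _ gap])
      then show ?thesis
        unfolding c_def using area Q by (intro arclen_triple_gap[OF t close_t _ pos]) blast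
    qed
  qed
  then show ?thesis
    using card_image[OF inj] arclen_pos c_pos unfolding c_def
    by (cases "finite P") (simp_all add: add_nonneg_pos)
qed

end

theorem theorem7p7:
  fixes g g1 g2 :: "real \<Rightarrow> real^2" and a b R1 R2 \<delta> :: real
    and v0 v1 v2 :: "real^2"
  assumes curve: "C2_regular_curve g g1 g2 a b"
    and pos_curv: "\<forall>t\<in>{a..b}. curvature g1 g2 t > 0"
    and arc: "convex_arc g a b"
    and totcurv: "total_curvature g1 g2 a b \<le> pi"
    and R: "0 < R1" "R1 \<le> R2"
    and rho: "\<forall>t\<in>{a..b}. R1 \<le> 1 / curvature g1 g2 t \<and> 1 / curvature g1 g2 t \<le> R2"
    and indep: "\<not> dependent {v1, v2}" "v1 \<noteq> v2"
    and dpos: "\<delta> > 0"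
    and d1: "\<delta> < (lattice_mindist (lattice v0 v1 v2))\<^sup>2 /
       (2 * (R2 + lattice_mindist (lattice v0 v1 v2) +
         sqrt ((R2 + lattice_mindist (lattice v0 v1 v2))\<^sup>2 - (lattice_mindist (lattice v0 v1 v2))\<^sup>2)))"
    and d2: "lattice_area v1 v2 / 2 - arc_length g1 a b * \<delta> - 3/2 * \<delta>\<^sup>2 > 0"
  shows "real (card {Q \<in> lattice v0 v1 v2. infdist Q (g ` {a..b}) < \<delta>}) <
    2 + arc_length g1 a b /
      (R1 * (lattice_area v1 v2 - 2 * arc_length g1 a b * \<delta> - 3 * \<delta>\<^sup>2)) powr (1/3)"
proof -
  interpret curvature_bounded_arc g g1 g2 a b R1 R2
    using curve pos_curv totcurv R rho by unfold_locales auto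
  have "v1 \<noteq> 0"
    using indep(1) dependent_zero by blast
  then have gap: "2 * \<delta> < lattice_mindist (lattice v0 v1 v2)"
    "4 * R2 * \<delta> < (lattice_mindist (lattice v0 v1 v2) - 2 * \<delta>)\<^sup>2"
    using gap_bounds_of_delta_bound[OF lattice_mindist_nonneg R2_pos dpos d1] by blast+
  have arc_length: "arc_length g1 a b = arclen b"
    unfolding arc_length_def arclen_def speed_def ..
  show ?thesis
    using d2 unfolding arc_length
    by (intro card_close_points_less[OF _ _ _ gap] lattice_mindist_le_dist lattice_det2_ge_area) auto
qed

end
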